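(* Suppose the set of extreme points of $\mathrm{New}(A)$ is affinely independent, and that $c\in\mathbb{R}^m$ satisfies $c_i\le 0$ whenever $a_i$ is nonextremal. Then $c\in C_{\mathrm{SAGE}}(A)$ if and only if $c\in C_{\mathrm{NNS}}(A)$.
   Context: Let $A\in\mathbb{R}^{n\times m}$ have distinct columns $a_1,\dots,a_m$. For $c\in\mathbb{R}^m$, $\mathrm{Sig}(A,c)$ denotes the function $x\mapsto\sum_{i=1}^m c_i\exp(a_i^\top x)$ on $\mathbb{R}^n$. $\mathrm{New}(A)=\mathrm{conv}\{a_1,\dots,a_m\}$ is the Newton polytope; $a_i$ is called extremal if it is an extreme point of $\mathrm{New}(A)$ and nonextremal otherwise. $C_{\mathrm{NNS}}(A)=\{c\in\mathbb{R}^m:\mathrm{Sig}(A,c)(x)\ge 0\ \forall x\in\mathbb{R}^n\}$. For $k\in[m]$, the $k$-th AGE cone is $C_{\mathrm{AGE}}(A,k)=\{c\in C_{\mathrm{NNS}}(A): c_i\ge 0\ \forall i\ne k\}$, and the SAGE cone is the Minkowski sum $C_{\mathrm{SAGE}}(A)=\sum_{k=1}^m C_{\mathrm{AGE}}(A,k)$. *)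

theory Defs
  imports "HOL-Analysis.Analysis"
begin

text \<open>Columns of A are indexed by the finite type 'm (so m = CARD('m)), and lie in
  R^n = real^'n. A coefficient vector c in R^m is an element of real^'m.\<close>

definition Sig :: "('m::finite \<Rightarrow> real^'n) \<Rightarrow> real^'m \<Rightarrow> real^'n \<Rightarrow> real" where
  "Sig A c x = (\<Sum>i\<in>UNIV. c $ i * exp (A i \<bullet> x))"

definition New :: "('m::finite \<Rightarrow> real^'n) \<Rightarrow> (real^'n) set" where
  "New A = convex hull (range A)"

definition extremal :: "('m::finite \<Rightarrow> real^'n) \<Rightarrow> 'm \<Rightarrow> bool" where
  "extremal A i \<longleftrightarrow> A i extreme_point_of New A"

definition C_NNS :: "('m::finite \<Rightarrow> real^'n) \<Rightarrow> (real^'m) set" where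
  "C_NNS A = {c. \<forall>x. Sig A c x \<ge> 0}"

definition C_AGE :: "('m::finite \<Rightarrow> real^'n) \<Rightarrow> 'm \<Rightarrow> (real^'m) set" where
  "C_AGE A k = {c \<in> C_NNS A. \<forall>i. i \<noteq> k \<longrightarrow> c $ i \<ge> 0}"

definition C_SAGE :: "('m::finite \<Rightarrow> real^'n) \<Rightarrow> (real^'m) set" where
  "C_SAGE A = {c. \<exists>v :: 'm \<Rightarrow> real^'m. (\<forall>k. v k \<in> C_AGE A k) \<and> c = (\<Sum>k\<in>UNIV. v k)}"

end

theory Submission
  imports Defs
begin

text \<open>Let E index the vertices of New A and write each exponent as a convex combination
  a_i = \<Sum>_j \<lambda>_ij a_j of vertices. As the vertices are affinely independent, the values
  a_j \<bullet> x + s (j \<in> E) can be prescribed arbitrarily, so c \<in> C_NNS A says that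
  g(\<tau>) = \<Sum>_i c_i exp (\<Sum>_j \<lambda>_ij \<tau>_j) is nonnegative on all of \<real>^E. After adding the coercive
  penalty \<delta> \<Sum>_j (exp \<tau>_j + exp (-\<tau>_j)), g has a minimiser \<tau>. For each nonvertex k (so c_k \<le> 0)
  put d_jk = -c_k \<lambda>_kj exp (\<lambda>_k \<bullet> \<tau> - \<tau>_j). Jensen's inequality for exp makes
  \<Sum>_j d_jk exp (a_j \<bullet> x) + c_k exp (a_k \<bullet> x) an AGE function, and the first-order condition at \<tau>
  shows that together these functions use at most c_j + \<delta> of each vertex coefficient. Letting
  \<delta> \<rightarrow> 0 along a convergent subsequence of the bounded matrices (d_jk) gives a SAGE decomposition.\<close>

lemma affine_independent_interpolation:
  fixes S :: "'a::euclidean_space set" and f :: "'a \<Rightarrow> real"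
  assumes "\<not> affine_dependent S"
  obtains w s where "\<forall>x\<in>S. w \<bullet> x + s = f x"
proof (cases "S = {}")
  case False
  then obtain a where "a \<in> S" by blast
  then have indep: "independent ((\<lambda>x. - a + x) ` (S - {a}))"
    using assms affine_dependent_iff_dependent2 by blast
  then obtain g where "linear g"
    and g: "\<forall>y\<in>(\<lambda>x. - a + x) ` (S - {a}). g y = f (a + y) - f a"
    using linear_independent_extend[OF indep, of "\<lambda>y. f (a + y) - f a"] by blast
  define w where "w = adjoint g 1"
  have "w \<bullet> x + (f a - w \<bullet> a) = f x" if "x \<in> S" for x
  proof (cases "x = a")
    case False
    have "w \<bullet> (- a + x) = g (- a + x)"
      using adjoint_works[OF \<open>linear g\<close>, of "- a + x" 1] by (simp add: w_def inner_commute)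
    also have "\<dots> = f x - f a" using g that False by auto
    finally show ?thesis by (simp add: inner_diff_right)
  qed simp
  then show ?thesis using that by blast
qed simp

lemma Sig_sum: "Sig A (\<Sum>k\<in>K. v k) x = (\<Sum>k\<in>K. Sig A (v k) x)"
  unfolding Sig_def by (simp add: sum_component sum_distrib_right) (rule sum.swap)

lemma C_SAGE_subset_C_NNS: "C_SAGE A \<subseteq> C_NNS A"
proof
  fix c assume "c \<in> C_SAGE A"
  then obtain v where v: "\<forall>k. v k \<in> C_AGE A k" and c: "c = (\<Sum>k\<in>UNIV. v k)"
    unfolding C_SAGE_def by blast
  have "Sig A c x \<ge> 0" for x
    unfolding c Sig_sum using v by (intro sum_nonneg) (auto simp: C_AGE_def C_NNS_def)
  then show "c \<in> C_NNS A" by (simp add: C_NNS_def)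
qed

lemma extreme_points_New: "{x. x extreme_point_of New A} = A ` {i. extremal A i}"
proof -
  have "x \<in> range A" if "x extreme_point_of New A" for x
    using that extreme_point_of_convex_hull unfolding New_def by blast
  then show ?thesis by (auto simp: extremal_def)
qed

lemma New_eq_convex_hull_extremal: "New A = convex hull (A ` {i. extremal A i})"
proof -
  have "compact (New A)" "convex (New A)"
    unfolding New_def by (simp_all add: compact_convex_hull finite_imp_compact)
  then show ?thesis using Krein_Milman_Minkowski extreme_points_New by metis
qed

definition convex_weights :: "('m::finite \<Rightarrow> 'a::real_vector) \<Rightarrow> 'm set \<Rightarrow> real^'m \<Rightarrow> 'a \<Rightarrow> bool"
  where "convex_weights A E u x \<longleftrightarrow>
    (\<forall>j. 0 \<le> u $ j) \<and> (\<forall>j. j \<notin> E \<longrightarrow> u $ j = 0) \<and> (\<Sum>j\<in>UNIV. u $ j) = 1 \<and>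
    (\<Sum>j\<in>UNIV. u $ j *\<^sub>R A j) = x"

definition barycentric_weights :: "('m::finite \<Rightarrow> 'a::real_vector) \<Rightarrow> 'm set \<Rightarrow> ('m \<Rightarrow> real^'m) \<Rightarrow> bool"
  where "barycentric_weights A E L \<longleftrightarrow> (\<forall>i. convex_weights A E (L i) (A i)) \<and> (\<forall>i\<in>E. L i = axis i 1)"

lemma convex_hull_imp_convex_weights:
  fixes A :: "'m::finite \<Rightarrow> 'a::real_vector"
  assumes "inj_on A E" and "x \<in> convex hull (A ` E)"
  shows "\<exists>u. convex_weights A E u x"
proof -
  obtain v where v0: "\<forall>y\<in>A ` E. 0 \<le> v y" and v1: "sum v (A ` E) = 1"
    and v2: "(\<Sum>y\<in>A ` E. v y *\<^sub>R y) = x"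
    using assms(2) convex_hull_finite[of "A ` E"] by auto
  define u :: "real^'m" where "u = (\<chi> j. if j \<in> E then v (A j) else 0)"
  have "(\<Sum>j\<in>UNIV. u $ j) = (\<Sum>j\<in>E. v (A j))"
    by (simp add: u_def sum.If_cases)
  moreover have "(\<Sum>j\<in>UNIV. u $ j *\<^sub>R A j) = (\<Sum>j\<in>UNIV. if j \<in> E then v (A j) *\<^sub>R A j else 0)"
    by (intro sum.cong) (auto simp: u_def)
  then have "(\<Sum>j\<in>UNIV. u $ j *\<^sub>R A j) = (\<Sum>j\<in>E. v (A j) *\<^sub>R A j)"
    by (simp add: sum.If_cases)
  moreover have "sum v (A ` E) = (\<Sum>j\<in>E. v (A j))"
    and "(\<Sum>y\<in>A ` E. v y *\<^sub>R y) = (\<Sum>j\<in>E. v (A j) *\<^sub>R A j)"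
    by (simp_all add: sum.reindex[OF assms(1)])
  ultimately have "convex_weights A E u x"
    using v0 v1 v2 by (auto simp: convex_weights_def u_def)
  then show ?thesis ..
qed

lemma convex_weights_axis:
  assumes "i \<in> E"
  shows "convex_weights A E (axis i 1) (A i)"
proof -
  have "(\<Sum>j\<in>UNIV. axis i 1 $ j *\<^sub>R A j) = A i"
    by (simp add: axis_def if_distrib[of "\<lambda>t. t *\<^sub>R _"] cong: if_cong)
  then show ?thesis using assms by (auto simp: convex_weights_def axis_def)
qed

lemma barycentric_weights_exist:
  fixes A :: "'m::finite \<Rightarrow> 'a::real_vector"
  assumes "inj_on A E" and "range A \<subseteq> convex hull (A ` E)"
  obtains L where "barycentric_weights A E L"
proof -
  have "\<forall>i. \<exists>u. convex_weights A E u (A i)"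
    using convex_hull_imp_convex_weights[OF assms(1)] assms(2) by blast
  then obtain U where "\<And>i. convex_weights A E (U i) (A i)"
    by metis
  then have "barycentric_weights A E (\<lambda>i. if i \<in> E then axis i 1 else U i)"
    by (auto simp: barycentric_weights_def convex_weights_axis)
  then show ?thesis by (rule that)
qed

lemma C_NNS_barycentric:
  fixes A :: "'m::finite \<Rightarrow> real^'n"
  assumes L: "barycentric_weights A E L" and "inj_on A E" and "\<not> affine_dependent (A ` E)"
    and "c \<in> C_NNS A"
  shows "c \<in> C_NNS L"
proof -
  have "Sig L c \<tau> \<ge> 0" for \<tau>
  proof -
    obtain w s where ws: "\<forall>y\<in>A ` E. w \<bullet> y + s = \<tau> $ inv_into E A y"
      by (rule affine_independent_interpolation[OF assms(3)])
    have "\<tau> $ j = w \<bullet> A j + s" if "j \<in> E" for j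
      using ws that \<open>inj_on A E\<close> by simp
    moreover have "L i $ j = 0" if "j \<notin> E" for i j
      using L that by (simp add: barycentric_weights_def convex_weights_def)
    ultimately have \<tau>: "L i $ j * \<tau> $ j = L i $ j * (w \<bullet> A j + s)" for i j
      by (cases "j \<in> E") simp_all
    have "L i \<bullet> \<tau> = w \<bullet> A i + s" for i
    proof -
      have "L i \<bullet> \<tau> = (\<Sum>j\<in>UNIV. L i $ j * (w \<bullet> A j + s))"
        by (simp add: inner_vec_def[of "L i"] \<tau>)
      also have "\<dots> = w \<bullet> (\<Sum>j\<in>UNIV. L i $ j *\<^sub>R A j) + (\<Sum>j\<in>UNIV. L i $ j) * s"
        by (simp add: inner_sum_right distrib_left sum.distrib sum_distrib_right)
      finally show ?thesis using L by (simp add: barycentric_weights_def convex_weights_def)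
    qed
    then have "Sig L c \<tau> = exp s * Sig A c w"
      by (simp add: Sig_def exp_add sum_distrib_left inner_commute algebra_simps)
    then show ?thesis using \<open>c \<in> C_NNS A\<close> by (simp add: C_NNS_def)
  qed
  then show ?thesis by (simp add: C_NNS_def)
qed

text \<open>The penalty makes the function coercive, so it attains its minimum even when the
  signomial itself only has infimum \<open>0\<close>.\<close>

definition penalized_Sig :: "('m::finite \<Rightarrow> real^'k) \<Rightarrow> real^'m \<Rightarrow> real \<Rightarrow> real^'k \<Rightarrow> real" where
  "penalized_Sig B c \<delta> \<tau> = Sig B c \<tau> + \<delta> * (\<Sum>j\<in>UNIV. exp (\<tau> $ j) + exp (- \<tau> $ j))"

lemma abs_le_exp_add_exp_minus: "\<bar>x::real\<bar> \<le> exp x + exp (- x)"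
  unfolding abs_le_iff
  using exp_ge_add_one_self[of x] exp_ge_add_one_self[of "- x"] exp_gt_zero[of x] exp_gt_zero[of "- x"]
  by linarith

lemma continuous_on_penalized_Sig: "continuous_on UNIV (penalized_Sig B c \<delta>)"
  unfolding penalized_Sig_def Sig_def by (intro continuous_intros)

lemma penalized_Sig_attains_min:
  fixes B :: "'m::finite \<Rightarrow> real^'k"
  assumes "c \<in> C_NNS B" and "\<delta> > 0"
  obtains t where "\<And>y. penalized_Sig B c \<delta> t \<le> penalized_Sig B c \<delta> y"
proof -
  let ?h = "penalized_Sig B c \<delta>"
  define S where "S = {\<tau>. ?h \<tau> \<le> ?h 0}"
  have coord_bound: "\<bar>\<tau> $ j\<bar> \<le> ?h 0 / \<delta>" if "\<tau> \<in> S" for \<tau> j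
  proof -
    have "exp (\<tau> $ j) + exp (- \<tau> $ j) \<le> (\<Sum>j\<in>UNIV. exp (\<tau> $ j) + exp (- \<tau> $ j))"
      by (rule member_le_sum) (auto intro: add_nonneg_nonneg)
    then have "\<delta> * \<bar>\<tau> $ j\<bar> \<le> \<delta> * (\<Sum>j\<in>UNIV. exp (\<tau> $ j) + exp (- \<tau> $ j))"
      using abs_le_exp_add_exp_minus[of "\<tau> $ j"] \<open>\<delta> > 0\<close> by (intro mult_left_mono) auto
    also have "\<dots> \<le> ?h \<tau>"
      using \<open>c \<in> C_NNS B\<close> by (simp add: penalized_Sig_def C_NNS_def)
    also have "\<dots> \<le> ?h 0" using that by (simp add: S_def)
    finally show ?thesis using \<open>\<delta> > 0\<close> by (simp add: field_simps)
  qed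
  then have "norm \<tau> \<le> CARD('k) * (?h 0 / \<delta>)" if "\<tau> \<in> S" for \<tau>
  proof -
    have "norm \<tau> \<le> (\<Sum>j\<in>UNIV. \<bar>\<tau> $ j\<bar>)" by (rule norm_le_l1_cart)
    also have "\<dots> \<le> (\<Sum>j\<in>(UNIV::'k set). ?h 0 / \<delta>)"
      using \<open>\<tau> \<in> S\<close> coord_bound by (intro sum_mono) blast
    finally show ?thesis by simp
  qed
  then have "bounded S" unfolding bounded_iff by blast
  moreover have "closed S"
    unfolding S_def by (intro closed_Collect_le continuous_on_penalized_Sig continuous_intros)
  moreover have "0 \<in> S" by (simp add: S_def)
  ultimately obtain t where "t \<in> S" and "\<forall>y\<in>S. ?h t \<le> ?h y"
    using continuous_attains_inf[of S ?h] compact_eq_bounded_closed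
      continuous_on_subset[OF continuous_on_penalized_Sig] by blast
  then have "?h t \<le> ?h y" for y by (cases "y \<in> S") (auto simp: S_def)
  then show ?thesis by (rule that)
qed

lemma penalized_Sig_critical_point:
  assumes "c \<in> C_NNS B" and "\<delta> > 0"
  obtains \<tau> where
    "\<And>j. (\<Sum>i\<in>UNIV. c $ i * exp (B i \<bullet> \<tau>) * B i $ j) + \<delta> * (exp (\<tau> $ j) - exp (- \<tau> $ j)) = 0"
proof -
  obtain t where min: "\<And>y. penalized_Sig B c \<delta> t \<le> penalized_Sig B c \<delta> y"
    using penalized_Sig_attains_min[OF assms] by blast
  have "(\<Sum>i\<in>UNIV. c $ i * exp (B i \<bullet> t) * B i $ j) + \<delta> * (exp (t $ j) - exp (- t $ j)) = 0" for j
  proof -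
    define \<phi> where "\<phi> s = penalized_Sig B c \<delta> (t + s *\<^sub>R axis j 1)" for s
    have \<phi>: "\<phi> s = (\<Sum>i\<in>UNIV. c $ i * exp (B i \<bullet> t + s * B i $ j))
        + \<delta> * (\<Sum>k\<in>UNIV. exp (t $ k + s * axis j 1 $ k) + exp (- (t $ k + s * axis j 1 $ k)))" for s
      by (simp add: \<phi>_def penalized_Sig_def Sig_def inner_add_right inner_axis)
    have "(\<phi> has_real_derivative (\<Sum>i\<in>UNIV. c $ i * exp (B i \<bullet> t) * B i $ j)
        + \<delta> * (exp (t $ j) - exp (- t $ j))) (at 0)"
      unfolding \<phi>[abs_def]
      by (auto intro!: derivative_eq_intros simp: axis_def algebra_simps if_distrib sum.If_cases)
    moreover have "\<forall>y. \<bar>0 - y\<bar> < 1 \<longrightarrow> \<phi> 0 \<le> \<phi> y"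
      using min by (simp add: \<phi>_def)
    ultimately show ?thesis
      using DERIV_local_min[of \<phi> _ 0 1] by simp
  qed
  then show ?thesis by (rule that)
qed

lemma exp_le_convex_combination:
  fixes a :: "'m::finite \<Rightarrow> 'a::real_inner" and u t :: "real^'m"
  assumes "\<forall>j. 0 \<le> u $ j" and "(\<Sum>j\<in>UNIV. u $ j) = 1"
  shows "exp ((\<Sum>j\<in>UNIV. u $ j *\<^sub>R a j) \<bullet> x - u \<bullet> t) \<le> (\<Sum>j\<in>UNIV. u $ j * exp (a j \<bullet> x - t $ j))"
proof -
  have "(\<Sum>j\<in>UNIV. u $ j *\<^sub>R a j) \<bullet> x - u \<bullet> t = (\<Sum>j\<in>UNIV. u $ j *\<^sub>R (a j \<bullet> x - t $ j))"
    by (simp add: inner_sum_left inner_vec_def right_diff_distrib sum_subtractf)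
  also have "exp \<dots> \<le> (\<Sum>j\<in>UNIV. u $ j * exp (a j \<bullet> x - t $ j))"
    using assms by (intro convex_on_sum[OF _ _ exp_convex]) auto
  finally show ?thesis .
qed

lemma convex_weights_imp_AGE:
  fixes A :: "'m::finite \<Rightarrow> real^'n"
  assumes u: "convex_weights A E u (A k)" and "a \<le> 0"
  shows "0 \<le> (\<Sum>j\<in>UNIV. (- a * u $ j * exp (u \<bullet> t - t $ j)) * exp (A j \<bullet> x)) + a * exp (A k \<bullet> x)"
proof -
  have "- a * exp (A k \<bullet> x) = (- a * exp (u \<bullet> t)) * exp (A k \<bullet> x - u \<bullet> t)"
    by (simp add: exp_diff)
  also have "\<dots> \<le> (- a * exp (u \<bullet> t)) * (\<Sum>j\<in>UNIV. u $ j * exp (A j \<bullet> x - t $ j))"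
    using exp_le_convex_combination[of u A x t] u \<open>a \<le> 0\<close>
    by (intro mult_left_mono) (auto simp: convex_weights_def intro: mult_nonpos_nonneg)
  also have "\<dots> = (\<Sum>j\<in>UNIV. (- a * u $ j * exp (u \<bullet> t - t $ j)) * exp (A j \<bullet> x))"
    by (simp add: sum_distrib_left exp_diff algebra_simps)
  finally show ?thesis by simp
qed

text \<open>Column \<open>k \<notin> E\<close> of \<open>D\<close> holds the vertex coefficients of the \<open>k\<close>-th AGE summand; together
  they may overdraw each vertex coefficient \<open>c $ j\<close> by at most \<open>\<delta>\<close>.\<close>

definition sage_witness :: "('m::finite \<Rightarrow> real^'n) \<Rightarrow> 'm set \<Rightarrow> real^'m \<Rightarrow> real \<Rightarrow> real^'m^'m \<Rightarrow> bool"
  where "sage_witness A E c \<delta> D \<longleftrightarrow>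
    (\<forall>j k. 0 \<le> D $ j $ k) \<and> (\<forall>j k. j \<notin> E \<or> k \<in> E \<longrightarrow> D $ j $ k = 0) \<and>
    (\<forall>j. j \<in> E \<longrightarrow> (\<Sum>k\<in>UNIV. D $ j $ k) \<le> c $ j + \<delta>) \<and>
    (\<forall>k x. k \<notin> E \<longrightarrow> 0 \<le> (\<Sum>j\<in>UNIV. D $ j $ k * exp (A j \<bullet> x)) + c $ k * exp (A k \<bullet> x))"

lemma sage_witness_exists_approx:
  fixes A :: "'m::finite \<Rightarrow> real^'n"
  assumes L: "barycentric_weights A E L" and "c \<in> C_NNS L"
    and c_neg: "\<forall>k. k \<notin> E \<longrightarrow> c $ k \<le> 0" and "\<delta> > 0"
  shows "\<exists>D. sage_witness A E c \<delta> D"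
proof -
  obtain \<tau> where crit:
    "\<And>j. (\<Sum>i\<in>UNIV. c $ i * exp (L i \<bullet> \<tau>) * L i $ j) + \<delta> * (exp (\<tau> $ j) - exp (- \<tau> $ j)) = 0"
    using penalized_Sig_critical_point[OF \<open>c \<in> C_NNS L\<close> \<open>\<delta> > 0\<close>] by blast
  define D :: "real^'m^'m" where
    "D = (\<chi> j k. if k \<in> E then 0 else - c $ k * L k $ j * exp (L k \<bullet> \<tau> - \<tau> $ j))"
  have L_weights: "\<And>i. convex_weights A E (L i) (A i)" and L_vertex: "\<And>i. i \<in> E \<Longrightarrow> L i = axis i 1"
    using L by (simp_all add: barycentric_weights_def)
  have row: "(\<Sum>k\<in>UNIV. D $ j $ k) \<le> c $ j + \<delta>" if "j \<in> E" for j
  proof -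
    have "c $ i * exp (L i \<bullet> \<tau>) * L i $ j =
        (if i = j then c $ j * exp (\<tau> $ j) else 0) - exp (\<tau> $ j) * D $ j $ i" for i
    proof (cases "i \<in> E")
      case True
      then have "L i \<bullet> \<tau> = \<tau> $ i" by (simp add: L_vertex inner_axis')
      moreover have "L i $ j = (if i = j then 1 else 0)" using True by (simp add: L_vertex axis_def)
      ultimately show ?thesis using True by (simp add: D_def)
    qed (use that in \<open>auto simp: D_def exp_diff\<close>)
    then have "(\<Sum>i\<in>UNIV. c $ i * exp (L i \<bullet> \<tau>) * L i $ j) =
        c $ j * exp (\<tau> $ j) - exp (\<tau> $ j) * (\<Sum>k\<in>UNIV. D $ j $ k)"
      by (simp add: sum_subtractf sum_distrib_left)
    with crit[of j] have "exp (\<tau> $ j) * (c $ j + \<delta> - (\<Sum>k\<in>UNIV. D $ j $ k)) = \<delta> * exp (- \<tau> $ j)"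
      by (simp add: algebra_simps)
    also have "\<dots> > 0" using \<open>\<delta> > 0\<close> by simp
    finally show ?thesis by (simp add: zero_less_mult_iff)
  qed
  have column: "0 \<le> (\<Sum>j\<in>UNIV. D $ j $ k * exp (A j \<bullet> x)) + c $ k * exp (A k \<bullet> x)" if "k \<notin> E" for k x
    using convex_weights_imp_AGE[OF L_weights[of k], where a = "c $ k" and t = \<tau> and x = x] c_neg that by (simp add: D_def)
  have "0 \<le> D $ j $ k" for j k
    using c_neg L_weights by (auto simp: D_def convex_weights_def intro!: mult_nonpos_nonneg)
  then have "sage_witness A E c \<delta> D"
    using row column L_weights by (auto simp: sage_witness_def D_def convex_weights_def)
  then show ?thesis ..
qed

lemma sage_witness_mono: "sage_witness A E c \<delta> D \<Longrightarrow> \<delta> \<le> \<delta>' \<Longrightarrow> sage_witness A E c \<delta>' D"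
  unfolding sage_witness_def by (meson add_left_mono order_trans)

lemma closed_sage_witness: "closed {D. sage_witness A E c \<delta> D}"
  unfolding sage_witness_def
  by (intro closed_Collect_conj closed_Collect_all closed_Collect_imp closed_Collect_le
      closed_Collect_eq open_Collect_const closed_Collect_const continuous_intros ballI)

lemma bounded_sage_witness:
  fixes A :: "'m::finite \<Rightarrow> real^'n"
  shows "bounded {D. sage_witness A E c \<delta> D}"
proof -
  have entry_bound: "\<bar>D $ j $ k\<bar> \<le> \<bar>c $ j\<bar> + \<bar>\<delta>\<bar>" if "sage_witness A E c \<delta> D" for D j k
  proof (cases "j \<in> E")
    case True
    have "D $ j $ k \<le> (\<Sum>k\<in>UNIV. D $ j $ k)"
      using that by (intro member_le_sum) (auto simp: sage_witness_def)
    then show ?thesis using that True by (force simp: sage_witness_def)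
  qed (use that in \<open>simp add: sage_witness_def\<close>)
  then have "norm D \<le> (\<Sum>j\<in>UNIV. \<Sum>k\<in>(UNIV::'m set). \<bar>c $ j\<bar> + \<bar>\<delta>\<bar>)"
    if "sage_witness A E c \<delta> D" for D :: "real^'m^'m"
  proof -
    have "norm D \<le> (\<Sum>j\<in>UNIV. norm (D $ j))" by (simp add: norm_vec_def L2_set_le_sum)
    also have "\<dots> \<le> (\<Sum>j\<in>UNIV. \<Sum>k\<in>UNIV. \<bar>D $ j $ k\<bar>)" by (intro sum_mono norm_le_l1_cart)
    also have "\<dots> \<le> (\<Sum>j\<in>UNIV. \<Sum>k\<in>(UNIV::'m set). \<bar>c $ j\<bar> + \<bar>\<delta>\<bar>)"
      using entry_bound that by (intro sum_mono) blast
    finally show ?thesis .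
  qed
  then show ?thesis unfolding bounded_iff by blast
qed

lemma sage_witness_limit:
  fixes A :: "'m::finite \<Rightarrow> real^'n"
  assumes approx: "\<And>\<delta>. \<delta> > 0 \<Longrightarrow> \<exists>D. sage_witness A E c \<delta> D"
  shows "\<exists>D. sage_witness A E c 0 D"
proof -
  define \<epsilon> where "\<epsilon> n = inverse (real (Suc n))" for n
  have "\<forall>n. \<exists>D. sage_witness A E c (\<epsilon> n) D"
    using approx by (simp add: \<epsilon>_def)
  then obtain d where d: "\<And>n. sage_witness A E c (\<epsilon> n) (d n)"
    by metis
  have "compact {D. sage_witness A E c 1 D}"
    by (simp add: compact_eq_bounded_closed bounded_sage_witness closed_sage_witness)
  moreover have "d n \<in> {D. sage_witness A E c 1 D}" for n
    using sage_witness_mono[OF d[of n]] by (simp add: \<epsilon>_def inverse_le_1_iff)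
  ultimately obtain D r where "strict_mono r" and lim: "(d \<circ> r) \<longlonglongrightarrow> D"
    by (blast elim: seq_compactE[OF compact_imp_seq_compact])
  have witness: "sage_witness A E c \<epsilon>' D" if "\<epsilon>' > 0" for \<epsilon>'
  proof -
    have "(\<epsilon> \<circ> r) \<longlonglongrightarrow> 0"
      using LIMSEQ_subseq_LIMSEQ[OF LIMSEQ_inverse_real_of_nat \<open>strict_mono r\<close>] by (simp add: \<epsilon>_def o_def)
    then have "eventually (\<lambda>n. (\<epsilon> \<circ> r) n < \<epsilon>') sequentially"
      using that by (rule order_tendstoD(2))
    then have "eventually (\<lambda>n. (d \<circ> r) n \<in> {D. sage_witness A E c \<epsilon>' D}) sequentially"
      by eventually_elim (auto intro: sage_witness_mono[OF d] less_imp_le)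
    then show ?thesis
      using Lim_in_closed_set[OF closed_sage_witness _ _ lim] by simp
  qed
  have "(\<Sum>k\<in>UNIV. D $ j $ k) \<le> c $ j" if "j \<in> E" for j
  proof (rule field_le_epsilon)
    fix e :: real assume "e > 0"
    then show "(\<Sum>k\<in>UNIV. D $ j $ k) \<le> c $ j + e" using witness that by (simp add: sage_witness_def)
  qed
  with witness[of 1] have "sage_witness A E c 0 D"
    by (simp add: sage_witness_def)
  then show ?thesis ..
qed

lemma sage_witness_imp_C_SAGE:
  assumes "sage_witness A E c 0 D"
  shows "c \<in> C_SAGE A"
proof -
  define v where "v k = (\<chi> i. if i = k then (if k \<in> E then c $ k - (\<Sum>l\<in>UNIV. D $ k $ l) else c $ k)
    else D $ i $ k)" for k
  have "v k \<in> C_AGE A k" for k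
  proof -
    have off: "\<forall>i. i \<noteq> k \<longrightarrow> v k $ i \<ge> 0" using assms by (simp add: v_def sage_witness_def)
    have "Sig A (v k) x \<ge> 0" for x
    proof (cases "k \<in> E")
      case True
      then have "\<forall>i. v k $ i \<ge> 0" using off assms by (auto simp: v_def sage_witness_def)
      then show ?thesis unfolding Sig_def by (intro sum_nonneg mult_nonneg_nonneg) auto
    next
      case False
      have "Sig A (v k) x = (\<Sum>i\<in>UNIV. D $ i $ k * exp (A i \<bullet> x) + (if i = k then c $ k * exp (A k \<bullet> x) else 0))"
        unfolding Sig_def using False assms by (intro sum.cong) (auto simp: v_def sage_witness_def)
      also have "\<dots> = (\<Sum>i\<in>UNIV. D $ i $ k * exp (A i \<bullet> x)) + c $ k * exp (A k \<bullet> x)"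
        by (simp add: sum.distrib)
      also have "\<dots> \<ge> 0" using False assms by (simp add: sage_witness_def)
      finally show ?thesis .
    qed
    then show ?thesis using off by (auto simp: C_AGE_def C_NNS_def)
  qed
  moreover have "c $ i = (\<Sum>k\<in>UNIV. v k) $ i" for i
  proof (cases "i \<in> E")
    case True
    have "(\<Sum>k\<in>UNIV. v k) $ i = (\<Sum>k\<in>UNIV. D $ i $ k + (if k = i then c $ i - (\<Sum>l\<in>UNIV. D $ i $ l) else 0))"
      unfolding sum_component using True assms by (intro sum.cong) (auto simp: v_def sage_witness_def)
    then show ?thesis by (simp add: sum.distrib)
  next
    case False
    have "(\<Sum>k\<in>UNIV. v k) $ i = (\<Sum>k\<in>UNIV. if k = i then c $ i else 0)"
      unfolding sum_component using False assms by (intro sum.cong) (auto simp: v_def sage_witness_def)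
    then show ?thesis by simp
  qed
  then have "c = (\<Sum>k\<in>UNIV. v k)" by (simp add: vec_eq_iff)
  ultimately show ?thesis unfolding C_SAGE_def by blast
qed

theorem mainTheorem8:
  fixes A :: "'m::finite \<Rightarrow> real^'n" and c :: "real^'m"
  assumes "inj A"
    and "\<not> affine_dependent {x. x extreme_point_of New A}"
    and "\<forall>i. \<not> extremal A i \<longrightarrow> c $ i \<le> 0"
  shows "c \<in> C_SAGE A \<longleftrightarrow> c \<in> C_NNS A"
proof
  show "c \<in> C_SAGE A \<Longrightarrow> c \<in> C_NNS A"
    using C_SAGE_subset_C_NNS by blast
next
  assume "c \<in> C_NNS A"
  define E where "E = {i. extremal A i}"
  have "inj_on A E"
    using \<open>inj A\<close> by (rule inj_on_subset) simp
  have indep: "\<not> affine_dependent (A ` E)"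
    using assms(2) by (simp add: E_def extreme_points_New)
  have "range A \<subseteq> convex hull (A ` E)"
    using New_eq_convex_hull_extremal[of A] hull_subset[of "range A" convex]
    by (simp add: E_def New_def)
  then obtain L where L: "barycentric_weights A E L"
    using barycentric_weights_exist[OF \<open>inj_on A E\<close>] by blast
  have "c \<in> C_NNS L"
    using C_NNS_barycentric[OF L \<open>inj_on A E\<close> indep \<open>c \<in> C_NNS A\<close>] .
  moreover have "\<forall>k. k \<notin> E \<longrightarrow> c $ k \<le> 0"
    using assms(3) by (simp add: E_def)
  ultimately obtain D where "sage_witness A E c 0 D"
    using sage_witness_limit sage_witness_exists_approx[OF L] by blast
  then show "c \<in> C_SAGE A"
    by (rule sage_witness_imp_C_SAGE)
qed

end
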